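(* Let $A\subseteq\mathbb N_0\times\mathbb S$ be a Schnorr test for a non-degenerate computable forecasting system $\varphi$ such that $A_n$ is a partial cut for every $n\in\mathbb N_0$. Then there is a recursive map $\tilde e:\mathbb N_0\times\mathbb S\to\mathbb N_0$ such that $\tilde e(\cdot,s)$ is a growth function for every $s\in\mathbb S$ and $$\overline P_\varphi\big([A_n^{\ge\ell}]\mid s\big)\le2^{-N}\quad\text{for all }(N,n,s)\in\mathbb N_0^2\times\mathbb S\text{ and all }\ell\ge\tilde e(N,s).$$
   Context: $\mathbb N_0=\{0,1,\dots\}$; $\Omega=\{0,1\}^{\mathbb N}$; $\mathbb S$ finite binary strings, $\square$ empty string, $|s|$ length, $\omega^n$ first $n$ entries; $[s]=\{\omega:\omega^{|s|}=s\}$, $[A]=\bigcup_{s\in A}[s]$; a partial cut is a prefix-free subset of $\mathbb S$. For $A\subseteq\mathbb N_0\times\mathbb S$: $A_n=\{s:(n,s)\in A\}$, $A_n^{<\ell}=\{s\in A_n:|s|<\ell\}$, $A_n^{\ge\ell}=\{s\in A_n:|s|\ge\ell\}$. $\mathcal I$: nonempty closed subintervals of $[0,1]$; $\overline E_I(f)=\max_{p\in I}[pf(1)+(1-p)f(0)]$. Forecasting system $\varphi:\mathbb S\to\mathcal I$, $\underline\varphi=\min\varphi$, $\overline\varphi=\max\varphi$; non-degenerate if $\underline\varphi(s)<1$ and $\overline\varphi(s)>0$ for all $s$; computable if $\underline\varphi,\overline\varphi$ are computable real maps. Supermartingale: $M:\mathbb S\to\mathbb R$ with $\overline E_{\varphi(s)}(M(s\,\cdot))\le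 M(s)$. For $G\subseteq\Omega$, $\overline P_\varphi(G\mid s)=\inf\{M(s):M\text{ supermartingale for }\varphi,\ \liminf_nM(\omega^n)\ge\mathbb 1_G(\omega)\ \forall\omega\in[s]\}$ and $\overline P_\varphi(G)=\overline P_\varphi(G\mid\square)$. A Schnorr test for $\varphi$ is a recursive $A\subseteq\mathbb N_0\times\mathbb S$ with $\overline P_\varphi([A_n])\le2^{-n}$ for all $n$, and a recursive $e:\mathbb N_0^2\to\mathbb N_0$ with $\overline P_\varphi([A_n]\setminus[A_n^{<\ell}])\le2^{-N}$ for all $(N,n)$ and $\ell\ge e(N,n)$. A growth function is a recursive, non-decreasing, unbounded map $\mathbb N_0\to\mathbb N_0$. *)

theory Defs
  imports "HOL-Analysis.Analysis" "HOL-Library.Sublist"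
begin

datatype recf = Zero | Succ | Proj nat | Comp recf "recf list" | Prim recf recf | Mn recf

inductive eval_rf :: "recf \<Rightarrow> nat list \<Rightarrow> nat \<Rightarrow> bool" where
  ev_zero: "eval_rf Zero xs 0"
| ev_succ: "eval_rf Succ [x] (Suc x)"
| ev_proj: "i < length xs \<Longrightarrow> eval_rf (Proj i) xs (xs ! i)"
| ev_comp: "length ys = length gs \<Longrightarrow> (\<forall>i < length gs. eval_rf (gs ! i) xs (ys ! i))
            \<Longrightarrow> eval_rf f ys z \<Longrightarrow> eval_rf (Comp f gs) xs z"
| ev_prim0: "eval_rf f xs y \<Longrightarrow> eval_rf (Prim f g) (0 # xs) y"
| ev_primS: "eval_rf (Prim f g) (n # xs) y \<Longrightarrow> eval_rf g (y # n # xs) z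
            \<Longrightarrow> eval_rf (Prim f g) (Suc n # xs) z"
| ev_mn: "eval_rf f (n # xs) 0 \<Longrightarrow> (\<forall>m < n. \<exists>k. eval_rf f (m # xs) (Suc k))
            \<Longrightarrow> eval_rf (Mn f) xs n"

definition recursive_fn :: "nat \<Rightarrow> (nat list \<Rightarrow> nat) \<Rightarrow> bool" where
  "recursive_fn k f \<longleftrightarrow> (\<exists>c. \<forall>xs. length xs = k \<longrightarrow> eval_rf c xs (f xs))"

type_synonym bstr = "bool list"   (* True = 1, False = 0 *)

text \<open>Bijective numbering of finite binary strings.\<close>
fun enc_str :: "bstr \<Rightarrow> nat" where
  "enc_str [] = 0"
| "enc_str (b # s) = 2 * enc_str s + (if b then 2 else 1)"

definition recursive_nat2 :: "(nat \<Rightarrow> nat \<Rightarrow> nat) \<Rightarrow> bool" where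
  "recursive_nat2 f \<longleftrightarrow> recursive_fn 2 (\<lambda>xs. f (xs ! 0) (xs ! 1))"

definition recursive_nat_str :: "(nat \<Rightarrow> bstr \<Rightarrow> nat) \<Rightarrow> bool" where
  "recursive_nat_str f \<longleftrightarrow>
     (\<exists>g. recursive_fn 2 g \<and> (\<forall>N s. g [N, enc_str s] = f N s))"

definition recursive_set_nat_str :: "(nat \<times> bstr) set \<Rightarrow> bool" where
  "recursive_set_nat_str A \<longleftrightarrow>
     recursive_nat_str (\<lambda>n s. if (n, s) \<in> A then 1 else 0)"

definition computable_real_map :: "(bstr \<Rightarrow> real) \<Rightarrow> bool" where
  "computable_real_map f \<longleftrightarrow>
     (\<exists>p q r. recursive_fn 2 p \<and> recursive_fn 2 q \<and> recursive_fn 2 r \<and>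
        (\<forall>s k. \<bar>(real (p [enc_str s, k]) - real (q [enc_str s, k])) / (real (r [enc_str s, k]) + 1)
                 - f s\<bar> \<le> 1 / 2 ^ k))"

definition growth_function :: "(nat \<Rightarrow> nat) \<Rightarrow> bool" where
  "growth_function f \<longleftrightarrow> recursive_fn 1 (\<lambda>xs. f (xs ! 0)) \<and> mono f \<and> (\<forall>m. \<exists>n. m \<le> f n)"

type_synonym path = "nat \<Rightarrow> bool"   (* \<omega> = (\<omega>_1, \<omega>_2, ...) stored 0-indexed *)

definition init :: "path \<Rightarrow> nat \<Rightarrow> bstr" where
  "init \<omega> n = map \<omega> [0..<n]"

definition cyl :: "bstr \<Rightarrow> path set" where
  "cyl s = {\<omega>. init \<omega> (length s) = s}"

definition cylset :: "bstr set \<Rightarrow> path set" where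
  "cylset A = (\<Union>s\<in>A. cyl s)"

definition partial_cut :: "bstr set \<Rightarrow> bool" where
  "partial_cut A \<longleftrightarrow> (\<forall>s\<in>A. \<forall>t\<in>A. prefix s t \<longrightarrow> s = t)"

definition sect :: "(nat \<times> bstr) set \<Rightarrow> nat \<Rightarrow> bstr set" where
  "sect A n = {s. (n, s) \<in> A}"

definition sect_lt :: "(nat \<times> bstr) set \<Rightarrow> nat \<Rightarrow> nat \<Rightarrow> bstr set" where
  "sect_lt A n l = {s \<in> sect A n. length s < l}"

definition sect_ge :: "(nat \<times> bstr) set \<Rightarrow> nat \<Rightarrow> nat \<Rightarrow> bstr set" where
  "sect_ge A n l = {s \<in> sect A n. l \<le> length s}"

definition is_interval :: "real set \<Rightarrow> bool" where
  "is_interval I \<longleftrightarrow> (\<exists>a b. 0 \<le> a \<and> a \<le> b \<and> b \<le> 1 \<and> I = {a..b})"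

definition forecasting_system :: "(bstr \<Rightarrow> real set) \<Rightarrow> bool" where
  "forecasting_system \<phi> \<longleftrightarrow> (\<forall>s. is_interval (\<phi> s))"

definition lower_fc :: "(bstr \<Rightarrow> real set) \<Rightarrow> bstr \<Rightarrow> real" where
  "lower_fc \<phi> s = Inf (\<phi> s)"

definition upper_fc :: "(bstr \<Rightarrow> real set) \<Rightarrow> bstr \<Rightarrow> real" where
  "upper_fc \<phi> s = Sup (\<phi> s)"

definition non_degenerate :: "(bstr \<Rightarrow> real set) \<Rightarrow> bool" where
  "non_degenerate \<phi> \<longleftrightarrow> (\<forall>s. lower_fc \<phi> s < 1 \<and> upper_fc \<phi> s > 0)"

definition computable_fs :: "(bstr \<Rightarrow> real set) \<Rightarrow> bool" where
  "computable_fs \<phi> \<longleftrightarrow> computable_real_map (lower_fc \<phi>) \<and> computable_real_map (upper_fc \<phi>)"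

text \<open>Upper expectation w.r.t. an interval of probabilities of outcome 1 (= True).\<close>
definition upper_exp :: "real set \<Rightarrow> (bool \<Rightarrow> real) \<Rightarrow> real" where
  "upper_exp I f = (SUP p\<in>I. p * f True + (1 - p) * f False)"

definition supermartingale :: "(bstr \<Rightarrow> real set) \<Rightarrow> (bstr \<Rightarrow> real) \<Rightarrow> bool" where
  "supermartingale \<phi> M \<longleftrightarrow> (\<forall>s. upper_exp (\<phi> s) (\<lambda>x. M (s @ [x])) \<le> M s)"

definition upper_prob :: "(bstr \<Rightarrow> real set) \<Rightarrow> path set \<Rightarrow> bstr \<Rightarrow> ereal" where
  "upper_prob \<phi> G s = Inf {ereal (M s) | M. supermartingale \<phi> M \<and>
      (\<forall>\<omega>\<in>cyl s. liminf (\<lambda>n. ereal (M (init \<omega> n))) \<ge> ereal (indicator G \<omega>))}"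

definition schnorr_test :: "(bstr \<Rightarrow> real set) \<Rightarrow> (nat \<times> bstr) set \<Rightarrow> bool" where
  "schnorr_test \<phi> A \<longleftrightarrow> recursive_set_nat_str A \<and>
     (\<forall>n. upper_prob \<phi> (cylset (sect A n)) [] \<le> ereal (1 / 2 ^ n)) \<and>
     (\<exists>e. recursive_nat2 e \<and>
        (\<forall>N n l. l \<ge> e N n \<longrightarrow>
           upper_prob \<phi> (cylset (sect A n) - cylset (sect_lt A n l)) [] \<le> ereal (1 / 2 ^ N)))"

end

theory Submission
  imports Defs
begin

text \<open>
  In every step a supermartingale for \<open>\<phi>\<close> can grow at most by the factor
  \<open>1 / min (upper_fc \<phi> t) (1 - lower_fc \<phi> t)\<close>; by non-degeneracy and computability this
  factor is bounded by \<open>2 ^ w t\<close> for a recursive \<open>w\<close>. Hence conditioning on \<open>s\<close> multiplies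
  upper probabilities by at most \<open>2 ^ K s\<close>, with \<open>K s = (\<Sum>c \<le> enc_str s. w c)\<close> recursive.
  Since \<open>A\<^sub>n\<close> is a partial cut, \<open>[A\<^sub>n\<^sup>\<ge>\<^sup>\<ell>]\<close> lies in \<open>[A\<^sub>n] - [A\<^sub>n\<^sup><\<^sup>\<ell>]\<close>, so the
  Schnorr modulus bounds it for small \<open>n\<close>, while for large \<open>n\<close> the bound on \<open>[A\<^sub>n]\<close> suffices.
  Asking for precision \<open>2 ^ -(N + K s)\<close> at the root yields the conditional bound \<open>2 ^ -N\<close>.
\<close>

section \<open>Closure properties of recursive functions\<close>

lemma recursive_fn_cong:
  "recursive_fn k f \<Longrightarrow> (\<And>xs. length xs = k \<Longrightarrow> f xs = g xs) \<Longrightarrow> recursive_fn k g"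
  unfolding recursive_fn_def by metis

lemma recursive_fn_proj: "i < k \<Longrightarrow> recursive_fn k (\<lambda>xs. xs ! i)"
  unfolding recursive_fn_def by (auto intro: ev_proj)

lemma recursive_fn_comp:
  assumes f: "recursive_fn m f" and len: "length gs = m" and gs: "\<forall>g\<in>set gs. recursive_fn k g"
  shows "recursive_fn k (\<lambda>xs. f (map (\<lambda>g. g xs) gs))"
proof -
  obtain cf where cf: "\<forall>ys. length ys = m \<longrightarrow> eval_rf cf ys (f ys)"
    using f unfolding recursive_fn_def by blast
  from gs obtain C where C: "\<forall>g\<in>set gs. \<forall>xs. length xs = k \<longrightarrow> eval_rf (C g) xs (g xs)"
    unfolding recursive_fn_def by metis
  have "eval_rf (Comp cf (map C gs)) xs (f (map (\<lambda>g. g xs) gs))" if "length xs = k" for xs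
    by (rule ev_comp[where ys = "map (\<lambda>g. g xs) gs"]) (use C cf len that in auto)
  then show ?thesis unfolding recursive_fn_def by blast
qed

lemma recursive_fn_compose_unary:
  "recursive_fn 1 (\<lambda>xs. h (xs ! 0)) \<Longrightarrow> recursive_fn k F \<Longrightarrow> recursive_fn k (\<lambda>xs. h (F xs))"
  using recursive_fn_comp[of 1 "\<lambda>xs. h (xs ! 0)" "[F]" k] by simp

lemma recursive_fn_compose_pair:
  "recursive_fn 2 h \<Longrightarrow> recursive_fn k F \<Longrightarrow> recursive_fn k G \<Longrightarrow> recursive_fn k (\<lambda>xs. h [F xs, G xs])"
  using recursive_fn_comp[of 2 h "[F, G]" k] by simp

lemma recursive_fn_Suc: "recursive_fn k F \<Longrightarrow> recursive_fn k (\<lambda>xs. Suc (F xs))"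
proof -
  have "eval_rf Succ xs (Suc (xs ! 0))" if "length xs = 1" for xs
    using that by (cases xs) (auto intro: ev_succ)
  then have "recursive_fn 1 (\<lambda>xs. Suc (xs ! 0))" unfolding recursive_fn_def by blast
  then show "recursive_fn k F \<Longrightarrow> recursive_fn k (\<lambda>xs. Suc (F xs))"
    by (rule recursive_fn_compose_unary)
qed

lemma recursive_fn_const: "recursive_fn k (\<lambda>_. c)"
proof (induction c)
  case 0
  show ?case unfolding recursive_fn_def by (auto intro: ev_zero)
qed (rule recursive_fn_Suc)

lemma recursive_fn_rec_nat:
  assumes f: "recursive_fn k f" and g: "recursive_fn (Suc (Suc k)) g"
  shows "recursive_fn (Suc k) (\<lambda>xs. rec_nat (f (tl xs)) (\<lambda>n y. g (y # n # tl xs)) (hd xs))"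
proof -
  obtain cf where cf: "\<forall>ys. length ys = k \<longrightarrow> eval_rf cf ys (f ys)"
    using f unfolding recursive_fn_def by blast
  obtain cg where cg: "\<forall>ys. length ys = Suc (Suc k) \<longrightarrow> eval_rf cg ys (g ys)"
    using g unfolding recursive_fn_def by blast
  have eval: "eval_rf (Prim cf cg) (n # ys) (rec_nat (f ys) (\<lambda>n y. g (y # n # ys)) n)"
    if "length ys = k" for n ys
  proof (induction n)
    case 0 then show ?case using cf that by (auto intro: ev_prim0)
  next
    case (Suc n) then show ?case using cg that by (auto intro: ev_primS)
  qed
  have "eval_rf (Prim cf cg) xs (rec_nat (f (tl xs)) (\<lambda>n y. g (y # n # tl xs)) (hd xs))"
    if "length xs = Suc k" for xs
    using that eval by (cases xs) auto
  then show ?thesis unfolding recursive_fn_def by blast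
qed

lemma recursive_fn_Least:
  assumes f: "recursive_fn (Suc k) f" and ex: "\<And>xs. length xs = k \<Longrightarrow> \<exists>n. f (n # xs) = 0"
  shows "recursive_fn k (\<lambda>xs. LEAST n. f (n # xs) = 0)"
proof -
  obtain cf where cf: "\<forall>ys. length ys = Suc k \<longrightarrow> eval_rf cf ys (f ys)"
    using f unfolding recursive_fn_def by blast
  have "eval_rf (Mn cf) xs (LEAST n. f (n # xs) = 0)" if xs: "length xs = k" for xs
  proof (rule ev_mn)
    let ?n = "LEAST n. f (n # xs) = 0"
    show "eval_rf cf (?n # xs) 0"
      using cf xs LeastI_ex[OF ex[OF xs]] by (metis length_Cons)
    show "\<forall>m<?n. \<exists>j. eval_rf cf (m # xs) (Suc j)"
    proof (intro allI impI)
      fix m assume "m < ?n"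
      then obtain j where "f (m # xs) = Suc j" using not_less_Least not0_implies_Suc by blast
      then show "\<exists>j. eval_rf cf (m # xs) (Suc j)" using cf xs by (metis length_Cons)
    qed
  qed
  then show ?thesis unfolding recursive_fn_def by blast
qed

lemma recursive_fn_Cons:
  assumes F: "recursive_fn (Suc k) F" and B: "recursive_fn k B"
  shows "recursive_fn k (\<lambda>xs. F (B xs # xs))"
proof -
  have "recursive_fn k (\<lambda>xs. F (map (\<lambda>g. g xs) (B # map (\<lambda>i xs. xs ! i) [0..<k])))"
    by (rule recursive_fn_comp[OF F]) (auto intro: recursive_fn_proj B)
  then show ?thesis by (rule recursive_fn_cong) (simp add: o_def, metis map_nth)
qed

lemma recursive_fn_tl:
  assumes "recursive_fn k F" shows "recursive_fn (Suc k) (\<lambda>xs. F (tl xs))"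
proof -
  have "recursive_fn (Suc k) (\<lambda>xs. F (map (\<lambda>g. g xs) (map (\<lambda>i xs. xs ! Suc i) [0..<k])))"
    by (rule recursive_fn_comp[OF assms]) (auto intro: recursive_fn_proj)
  then show ?thesis
    by (rule recursive_fn_cong) (auto simp: length_Suc_conv o_def map_nth)
qed

lemma recursive_nat2_compose:
  "recursive_nat2 f \<Longrightarrow> recursive_fn k F \<Longrightarrow> recursive_fn k G \<Longrightarrow> recursive_fn k (\<lambda>xs. f (F xs) (G xs))"
  unfolding recursive_nat2_def using recursive_fn_comp[of 2 "\<lambda>xs. f (xs ! 0) (xs ! 1)" "[F, G]" k] by simp

lemma recursive_nat2_rec_nat:
  assumes "recursive_fn 1 (\<lambda>xs. f (xs ! 0))" "recursive_fn 3 (\<lambda>xs. g (xs ! 0) (xs ! 1) (xs ! 2))"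
  shows "recursive_nat2 (\<lambda>n b. rec_nat (f b) (\<lambda>m y. g y m b) n)"
proof -
  have "recursive_fn 2 (\<lambda>xs. rec_nat (f (tl xs ! 0)) (\<lambda>n y. g y n (tl xs ! 0)) (hd xs))"
    using recursive_fn_rec_nat[of 1 "\<lambda>xs. f (xs ! 0)" "\<lambda>xs. g (xs ! 0) (xs ! 1) (xs ! 2)"] assms
    by (simp add: numeral_3_eq_3 numeral_2_eq_2)
  then show ?thesis unfolding recursive_nat2_def
    by (rule recursive_fn_cong) (auto simp: length_Suc_conv numeral_2_eq_2)
qed

lemma recursive_nat2_add: "recursive_nat2 (+)"
proof -
  have "recursive_nat2 (\<lambda>n b. rec_nat b (\<lambda>m y. Suc y) n)"
    by (intro recursive_nat2_rec_nat recursive_fn_Suc recursive_fn_proj) simp_all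
  moreover have "rec_nat b (\<lambda>m y. Suc y) n = n + b" for n b :: nat by (induction n) simp_all
  ultimately show ?thesis by simp
qed

lemma recursive_nat2_mult: "recursive_nat2 (*)"
proof -
  have "recursive_nat2 (\<lambda>n b. rec_nat 0 (\<lambda>m y. y + b) n)"
    by (intro recursive_nat2_rec_nat recursive_fn_const
        recursive_nat2_compose[OF recursive_nat2_add] recursive_fn_proj) simp_all
  moreover have "rec_nat 0 (\<lambda>m y. y + b) n = n * b" for n b :: nat by (induction n) simp_all
  ultimately show ?thesis by simp
qed

lemma recursive_nat2_diff: "recursive_nat2 (-)"
proof -
  have "rec_nat 0 (\<lambda>n y. n) n = n - 1" for n :: nat by (cases n) simp_all
  then have "recursive_fn 1 (\<lambda>xs. hd xs - 1)"
    using recursive_fn_rec_nat[of 0 "\<lambda>_. 0" "\<lambda>xs. xs ! 1"] by (simp add: recursive_fn_const recursive_fn_proj)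
  then have "recursive_fn 1 (\<lambda>xs. xs ! 0 - 1)"
    by (rule recursive_fn_cong) (auto simp: length_Suc_conv)
  then have "recursive_fn 3 (\<lambda>xs. xs ! 0 - 1)"
    using recursive_fn_compose_unary[where h = "\<lambda>y. y - 1", OF _ recursive_fn_proj[of 0 3]] by simp
  then have "recursive_nat2 (\<lambda>n b. rec_nat b (\<lambda>m y. y - 1) n)"
    using recursive_nat2_rec_nat[where f = "\<lambda>b. b" and g = "\<lambda>y m b. y - 1"] recursive_fn_proj[of 0 1]
    by simp
  moreover have "rec_nat b (\<lambda>m y. y - 1) n = b - n" for n b :: nat by (induction n) simp_all
  ultimately have "recursive_nat2 (\<lambda>n b. b - n)" by simp
  from recursive_nat2_compose[OF this recursive_fn_proj[of 1 2] recursive_fn_proj[of 0 2]]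
  show ?thesis unfolding recursive_nat2_def by simp
qed

lemmas recursive_fn_add = recursive_nat2_compose[OF recursive_nat2_add]
lemmas recursive_fn_mult = recursive_nat2_compose[OF recursive_nat2_mult]
lemmas recursive_fn_diff = recursive_nat2_compose[OF recursive_nat2_diff]

lemma recursive_fn_power2: "recursive_fn k F \<Longrightarrow> recursive_fn k (\<lambda>xs. 2 ^ F xs)"
proof -
  have "rec_nat 1 (\<lambda>n y. y + y) n = (2::nat) ^ n" for n by (induction n) simp_all
  then have "recursive_fn 1 (\<lambda>xs. 2 ^ hd xs)"
    using recursive_fn_rec_nat[of 0 "\<lambda>_. 1" "\<lambda>xs. xs ! 0 + xs ! 0"]
    by (simp add: recursive_fn_const recursive_fn_add recursive_fn_proj)
  then have "recursive_fn 1 (\<lambda>xs. 2 ^ (xs ! 0))"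
    by (rule recursive_fn_cong) (auto simp: length_Suc_conv)
  then show "recursive_fn k F \<Longrightarrow> recursive_fn k (\<lambda>xs. 2 ^ F xs)"
    by (rule recursive_fn_compose_unary)
qed

lemma recursive_fn_sum:
  assumes F: "recursive_fn (Suc k) F" and B: "recursive_fn k B"
  shows "recursive_fn k (\<lambda>xs. \<Sum>j<B xs. F (j # xs))"
proof -
  have sum: "rec_nat 0 (\<lambda>n y. y + F (n # xs)) m = (\<Sum>j<m. F (j # xs))" for m xs
    by (induction m) simp_all
  have "recursive_fn (Suc k) (\<lambda>xs. \<Sum>j<hd xs. F (j # tl xs))"
    using recursive_fn_rec_nat[of k "\<lambda>_. 0" "\<lambda>zs. zs ! 0 + F (tl zs)"]
    by (simp add: sum recursive_fn_const recursive_fn_add recursive_fn_proj recursive_fn_tl[OF F])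
  from recursive_fn_Cons[OF this B] show ?thesis by simp
qed

lemma inj_enc_str: "inj enc_str"
proof (rule injI)
  show "enc_str s = enc_str t \<Longrightarrow> s = t" for s t
  proof (induction s arbitrary: t)
    case Nil then show ?case by (cases t) (auto split: if_splits)
  next
    case (Cons a s)
    then obtain b t' where t: "t = b # t'" by (cases t) (auto split: if_splits)
    with Cons.prems have "2 * enc_str s + (if a then 2 else 1) = 2 * enc_str t' + (if b then 2 else 1)"
      by simp
    then have "a = b \<and> enc_str s = enc_str t'"
      by (cases a; cases b) (simp_all, presburger+)
    then show ?case using Cons.IH t by simp
  qed
qed

lemma surj_enc_str: "surj enc_str"
proof -
  have "\<exists>s. enc_str s = n" for n
  proof (induction n rule: less_induct)
    case (less n)
    consider "n = 0" | "odd n" | "even n" "n \<noteq> 0" by blast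
    then show ?case
    proof cases
      case 1 then show ?thesis by (intro exI[of _ "[]"]) simp
    next
      case 2
      then have n: "n = 2 * (n div 2) + 1" by presburger
      have "n div 2 < n" using 2 by presburger
      with less obtain s where "enc_str s = n div 2" by blast
      with n show ?thesis by (intro exI[of _ "False # s"]) simp
    next
      case 3
      then have n: "n = 2 * (n div 2 - 1) + 2" by presburger
      have "n div 2 - 1 < n" using 3 by presburger
      with less obtain s where "enc_str s = n div 2 - 1" by blast
      with n show ?thesis by (intro exI[of _ "True # s"]) simp
    qed
  qed
  then show ?thesis by (metis surjI)
qed

lemma enc_str_take_le: "enc_str (take j s) \<le> enc_str s"
proof (induction s arbitrary: j)
  case (Cons a s)
  then show ?case by (cases j) auto
qed simp

lemma sum_prefix_codes_le:
  "(\<Sum>j<length s. w (enc_str (take j s))) \<le> (\<Sum>c<Suc (enc_str s). w c :: nat)"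
proof -
  have inj: "inj_on (\<lambda>j. enc_str (take j s)) {..<length s}"
  proof (rule inj_onI)
    fix i j assume "i \<in> {..<length s}" "j \<in> {..<length s}" "enc_str (take i s) = enc_str (take j s)"
    then have "length (take i s) = length (take j s)" by (metis inj_enc_str injD)
    then show "i = j" using \<open>i \<in> _\<close> \<open>j \<in> _\<close> by simp
  qed
  have "(\<Sum>j<length s. w (enc_str (take j s))) = (\<Sum>c\<in>(\<lambda>j. enc_str (take j s)) ` {..<length s}. w c)"
    by (simp add: sum.reindex[OF inj])
  also have "\<dots> \<le> (\<Sum>c<Suc (enc_str s). w c)"
    by (rule sum_mono2) (auto simp: less_Suc_eq_le enc_str_take_le)
  finally show ?thesis .
qed

section \<open>Dyadic lower bounds for computable reals\<close>

lemma dyadic_test_iff: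
  fixes p q r k :: nat
  shows "q * 2 ^ k + 2 * (r + 1) \<le> p * 2 ^ k \<longleftrightarrow> 2 / 2 ^ k \<le> (real p - real q) / (real r + 1)"
proof -
  have "q * 2 ^ k + 2 * (r + 1) \<le> p * 2 ^ k \<longleftrightarrow> real (q * 2 ^ k + 2 * (r + 1)) \<le> real (p * 2 ^ k)"
    by (rule of_nat_le_iff[symmetric])
  also have "\<dots> \<longleftrightarrow> 2 / 2 ^ k \<le> (real p - real q) / (real r + 1)"
    by (simp add: field_simps)
  finally show ?thesis .
qed

lemma computable_real_map_one_minus:
  assumes "computable_real_map f"
  shows "computable_real_map (\<lambda>s. 1 - f s)"
proof -
  obtain p q r where rec: "recursive_fn 2 p" "recursive_fn 2 q" "recursive_fn 2 r"
    and approx: "\<And>s k. \<bar>(real (p [enc_str s, k]) - real (q [enc_str s, k])) / (real (r [enc_str s, k]) + 1)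
                   - f s\<bar> \<le> 1 / 2 ^ k"
    using assms unfolding computable_real_map_def by blast
  have flip: "(real (r xs + 1 + q xs) - real (p xs)) / (real (r xs) + 1) - (1 - f s)
        = - ((real (p xs) - real (q xs)) / (real (r xs) + 1) - f s)" for xs s
    by (simp add: field_simps)
  show ?thesis unfolding computable_real_map_def
  proof (intro exI conjI allI)
    show "recursive_fn 2 (\<lambda>xs. r xs + 1 + q xs)"
      using rec by (intro recursive_fn_add recursive_fn_const)
    show "recursive_fn 2 p" "recursive_fn 2 r" by (fact rec)+
    show "\<bar>(real (r [enc_str s, k] + 1 + q [enc_str s, k]) - real (p [enc_str s, k]))
          / (real (r [enc_str s, k]) + 1) - (1 - f s)\<bar> \<le> 1 / 2 ^ k" for s k
      unfolding flip abs_minus_cancel by (rule approx)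
  qed
qed

lemma computable_real_map_dyadic_lower_bound:
  assumes "computable_real_map f" and pos: "\<And>s. 0 < f s"
  shows "\<exists>w. recursive_fn 1 (\<lambda>xs. w (xs ! 0)) \<and> (\<forall>s. 1 / 2 ^ w (enc_str s) \<le> f s)"
proof -
  obtain p q r where rec: "recursive_fn 2 p" "recursive_fn 2 q" "recursive_fn 2 r"
    and approx: "\<And>s k. \<bar>(real (p [enc_str s, k]) - real (q [enc_str s, k])) / (real (r [enc_str s, k]) + 1)
                   - f s\<bar> \<le> 1 / 2 ^ k"
    using assms(1) unfolding computable_real_map_def by blast
  \<comment> \<open>\<open>test [k, c] = 0\<close> iff the \<open>k\<close>-th approximation at \<open>c\<close> is at least \<open>2 / 2 ^ k\<close>\<close>
  define test where "test xs = q [xs ! 1, xs ! 0] * 2 ^ (xs ! 0) + 2 * (r [xs ! 1, xs ! 0] + 1)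
    - p [xs ! 1, xs ! 0] * 2 ^ (xs ! 0)" for xs
  define w where "w c = (LEAST k. test [k, c] = 0)" for c
  have arg_swap: "recursive_fn 2 (\<lambda>xs. g [xs ! 1, xs ! 0])" if "recursive_fn 2 g" for g
    by (rule recursive_fn_compose_pair[OF that recursive_fn_proj recursive_fn_proj]) simp_all
  have "recursive_fn 2 test" unfolding test_def
    by (intro recursive_fn_diff recursive_fn_add recursive_fn_mult recursive_fn_power2
        recursive_fn_Suc recursive_fn_const recursive_fn_proj arg_swap rec) simp_all
  have passes: "test [k, enc_str s] = 0 \<longleftrightarrow>
      2 / 2 ^ k \<le> (real (p [enc_str s, k]) - real (q [enc_str s, k])) / (real (r [enc_str s, k]) + 1)"
    for k s
    by (simp add: test_def flip: dyadic_test_iff)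
  have "\<exists>k. test [k, c] = 0" for c
  proof -
    obtain s where c: "c = enc_str s" using surj_enc_str by blast
    obtain k where "(1 / 2) ^ k < f s / 3" using real_arch_pow_inv[of "f s / 3" "1 / 2"] pos by auto
    then have "3 / 2 ^ k < f s" by (simp add: power_one_over)
    then have "test [k, enc_str s] = 0"
      unfolding passes using approx[of s k] by (simp add: abs_le_iff)
    then show ?thesis unfolding c by blast
  qed
  note least = LeastI_ex[OF this, folded w_def]
  have "recursive_fn 1 (\<lambda>xs. LEAST k. test (k # xs) = 0)"
    by (rule recursive_fn_Least) (use \<open>recursive_fn 2 test\<close> least in \<open>auto simp: length_Suc_conv numeral_2_eq_2\<close>)
  then have "recursive_fn 1 (\<lambda>xs. w (xs ! 0))"
    by (rule recursive_fn_cong) (auto simp: w_def length_Suc_conv)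
  moreover have "1 / 2 ^ w (enc_str s) \<le> f s" for s
    using least[of "enc_str s"] approx[of s "w (enc_str s)"] unfolding passes by (simp add: abs_le_iff)
  ultimately show ?thesis by blast
qed

lemma non_degenerate_dyadic_weight:
  assumes "non_degenerate \<phi>" and "computable_fs \<phi>"
  obtains w where "recursive_fn 1 (\<lambda>xs. w (xs ! 0))"
    and "\<And>t. 1 / 2 ^ w (enc_str t) \<le> upper_fc \<phi> t" and "\<And>t. 1 / 2 ^ w (enc_str t) \<le> 1 - lower_fc \<phi> t"
proof -
  obtain wU where wU: "recursive_fn 1 (\<lambda>xs. wU (xs ! 0))" "\<And>t. 1 / 2 ^ wU (enc_str t) \<le> upper_fc \<phi> t"
    using computable_real_map_dyadic_lower_bound[of "upper_fc \<phi>"] assms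
    unfolding computable_fs_def non_degenerate_def by auto
  obtain wL where wL: "recursive_fn 1 (\<lambda>xs. wL (xs ! 0))" "\<And>t. 1 / 2 ^ wL (enc_str t) \<le> 1 - lower_fc \<phi> t"
    using computable_real_map_dyadic_lower_bound[OF computable_real_map_one_minus, of "lower_fc \<phi>"] assms
    unfolding computable_fs_def non_degenerate_def by auto
  have small: "(1::real) / 2 ^ (wU c + wL c) \<le> 1 / 2 ^ wU c" "(1::real) / 2 ^ (wU c + wL c) \<le> 1 / 2 ^ wL c"
    for c by (simp_all add: divide_left_mono power_increasing)
  show ?thesis
  proof (rule that[of "\<lambda>c. wU c + wL c"])
    show "recursive_fn 1 (\<lambda>xs. wU (xs ! 0) + wL (xs ! 0))" using wU(1) wL(1) by (rule recursive_fn_add)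
    show "1 / 2 ^ (wU (enc_str t) + wL (enc_str t)) \<le> upper_fc \<phi> t" for t
      using small(1)[of "enc_str t"] wU(2)[of t] by linarith
    show "1 / 2 ^ (wU (enc_str t) + wL (enc_str t)) \<le> 1 - lower_fc \<phi> t" for t
      using small(2)[of "enc_str t"] wL(2)[of t] by linarith
  qed
qed

section \<open>Growth of supermartingales\<close>

lemma forecasting_system_interval:
  assumes "forecasting_system \<phi>"
  shows "\<phi> s = {lower_fc \<phi> s..upper_fc \<phi> s}" and "0 \<le> lower_fc \<phi> s"
    and "lower_fc \<phi> s \<le> upper_fc \<phi> s" and "upper_fc \<phi> s \<le> 1"
proof -
  obtain a b where "0 \<le> a" "a \<le> b" "b \<le> 1" "\<phi> s = {a..b}"
    using assms unfolding forecasting_system_def is_interval_def by blast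
  then show "\<phi> s = {lower_fc \<phi> s..upper_fc \<phi> s}" "0 \<le> lower_fc \<phi> s"
    "lower_fc \<phi> s \<le> upper_fc \<phi> s" "upper_fc \<phi> s \<le> 1"
    unfolding lower_fc_def upper_fc_def by auto
qed

lemma supermartingale_le:
  assumes fs: "forecasting_system \<phi>" and sm: "supermartingale \<phi> M" and p: "p \<in> \<phi> s"
  shows "p * M (s @ [True]) + (1 - p) * M (s @ [False]) \<le> M s"
proof -
  have unit: "0 \<le> q" "q \<le> 1" if "q \<in> \<phi> s" for q
    using that forecasting_system_interval[OF fs, of s] by auto
  have "bdd_above ((\<lambda>q. q * M (s @ [True]) + (1 - q) * M (s @ [False])) ` \<phi> s)"
    by (rule bdd_aboveI2[where M = "max (M (s @ [True])) (M (s @ [False]))"])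
      (intro convex_bound_le, use unit in auto)
  then have "p * M (s @ [True]) + (1 - p) * M (s @ [False]) \<le> upper_exp (\<phi> s) (\<lambda>x. M (s @ [x]))"
    unfolding upper_exp_def by (rule cSUP_upper[OF p])
  also have "\<dots> \<le> M s" using sm unfolding supermartingale_def by blast
  finally show ?thesis .
qed

lemma supermartingale_child_le:
  assumes fs: "forecasting_system \<phi>" and sm: "supermartingale \<phi> M"
  shows "\<exists>b. M (s @ [b]) \<le> M s"
proof -
  let ?p = "lower_fc \<phi> s"
  have p: "?p \<in> \<phi> s" "0 \<le> ?p" "?p \<le> 1" using forecasting_system_interval[OF fs, of s] by auto
  have "min (M (s @ [True])) (M (s @ [False])) \<le> ?p * M (s @ [True]) + (1 - ?p) * M (s @ [False])"
    using convex_bound_le[of "- M (s @ [True])" "- min (M (s @ [True])) (M (s @ [False]))"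
        "- M (s @ [False])" ?p "1 - ?p"] p
    by simp
  also have "\<dots> \<le> M s" by (rule supermartingale_le[OF fs sm p(1)])
  finally show ?thesis by (metis min_def)
qed

lemma path_following_choice:
  fixes t :: bstr and nxt :: "bstr \<Rightarrow> bool"
  obtains \<omega> where "\<And>i. init \<omega> (length t + i) = ((\<lambda>v. v @ [nxt v]) ^^ i) t"
proof
  define u where "u i = ((\<lambda>v. v @ [nxt v]) ^^ i) t" for i
  have len: "length (u i) = length t + i" for i by (induction i) (simp_all add: u_def)
  have prefix: "prefix (u i) (u (i + d))" for i d by (induction d) (simp_all add: u_def)
  have nth_prefix: "u i ! j = u k ! j" if "j < length (u i)" "prefix (u i) (u k)" for i j k
    using that by (auto elim!: prefixE simp: nth_append)
  fix i
  show "init (\<lambda>j. u (Suc j) ! j) (length t + i) = u i"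
  proof (rule nth_equalityI)
    fix j assume "j < length (init (\<lambda>j. u (Suc j) ! j) (length t + i))"
    then have j: "j < length t + i" by (simp add: init_def)
    have "u (Suc j) ! j = u (Suc j + i) ! j" by (rule nth_prefix) (simp add: len, rule prefix)
    also have "\<dots> = u i ! j"
      by (rule nth_prefix[symmetric]) (use j len prefix[of i "Suc j"] in \<open>simp_all add: add.commute\<close>)
    finally show "init (\<lambda>j. u (Suc j) ! j) (length t + i) ! j = u i ! j" using j by (simp add: init_def)
  qed (simp add: init_def len)
qed

lemma supermartingale_nonneg:
  assumes fs: "forecasting_system \<phi>" and sm: "supermartingale \<phi> M"
    and lim: "\<And>\<omega>. 0 \<le> liminf (\<lambda>n. ereal (M (init \<omega> n)))"
  shows "0 \<le> M t"
proof (rule ccontr)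
  assume neg: "\<not> 0 \<le> M t"
  \<comment> \<open>always moving to a child where \<open>M\<close> does not increase keeps \<open>M\<close> below \<open>M t < 0\<close>\<close>
  define nxt where "nxt v = (SOME b. M (v @ [b]) \<le> M v)" for v
  have step: "M (v @ [nxt v]) \<le> M v" for v
    unfolding nxt_def by (rule someI_ex) (rule supermartingale_child_le[OF fs sm])
  obtain \<omega> where \<omega>: "\<And>i. init \<omega> (length t + i) = ((\<lambda>v. v @ [nxt v]) ^^ i) t"
    using path_following_choice[of t nxt] by blast
  have "M (((\<lambda>v. v @ [nxt v]) ^^ i) t) \<le> M t" for i
    by (induction i) (auto intro: order_trans[OF step])
  then have "eventually (\<lambda>n. ereal (M (init \<omega> n)) \<le> ereal (M t)) sequentially"
    unfolding eventually_sequentially by (metis \<omega> le_add_diff_inverse ereal_less_eq(3))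
  moreover have "eventually (\<lambda>n. ereal (M t) < ereal (M (init \<omega> n))) sequentially"
  proof -
    have "\<forall>y<ereal 0. eventually (\<lambda>n. y < ereal (M (init \<omega> n))) sequentially"
      using lim[of \<omega>] by (simp only: zero_ereal_def le_Liminf_iff)
    moreover have "ereal (M t) < ereal 0" using neg by simp
    ultimately show ?thesis by blast
  qed
  ultimately have "eventually (\<lambda>n. False) sequentially"
    by eventually_elim auto
  then show False by simp
qed

lemma supermartingale_snoc_le:
  assumes fs: "forecasting_system \<phi>" and sm: "supermartingale \<phi> M" and nonneg: "\<And>t. 0 \<le> M t"
    and up: "1 / 2 ^ w \<le> upper_fc \<phi> s" and low: "1 / 2 ^ w \<le> 1 - lower_fc \<phi> s"
  shows "M (s @ [b]) \<le> M s * 2 ^ w"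
proof -
  note I = forecasting_system_interval[OF fs, of s]
  obtain c where c: "1 / 2 ^ w \<le> c" "c * M (s @ [b]) \<le> M s"
  proof (cases b)
    case True
    have "upper_fc \<phi> s * M (s @ [True]) + (1 - upper_fc \<phi> s) * M (s @ [False]) \<le> M s"
      by (rule supermartingale_le[OF fs sm]) (use I in auto)
    moreover have "0 \<le> (1 - upper_fc \<phi> s) * M (s @ [False])" using I nonneg by simp
    ultimately show ?thesis using that[OF up] True by simp
  next
    case False
    have "lower_fc \<phi> s * M (s @ [True]) + (1 - lower_fc \<phi> s) * M (s @ [False]) \<le> M s"
      by (rule supermartingale_le[OF fs sm]) (use I in auto)
    moreover have "0 \<le> lower_fc \<phi> s * M (s @ [True])" using I nonneg by simp
    ultimately show ?thesis using that[OF low] False by simp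
  qed
  have "M (s @ [b]) / 2 ^ w \<le> c * M (s @ [b])"
    using mult_right_mono[OF c(1) nonneg[of "s @ [b]"]] by simp
  also have "\<dots> \<le> M s" by (fact c(2))
  finally show ?thesis by (simp add: divide_le_eq)
qed

lemma supermartingale_le_weighted:
  assumes fs: "forecasting_system \<phi>" and sm: "supermartingale \<phi> M" and nonneg: "\<And>t. 0 \<le> M t"
    and up: "\<And>t. 1 / 2 ^ w t \<le> upper_fc \<phi> t" and low: "\<And>t. 1 / 2 ^ w t \<le> 1 - lower_fc \<phi> t"
  shows "M s \<le> M [] * 2 ^ (\<Sum>j<length s. w (take j s))"
proof (induction s rule: rev_induct)
  case (snoc b s)
  have "M (s @ [b]) \<le> M s * 2 ^ w s"
    by (rule supermartingale_snoc_le[OF fs sm nonneg up low])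
  also have "\<dots> \<le> M [] * 2 ^ (\<Sum>j<length s. w (take j s)) * 2 ^ w s"
    using snoc.IH by (rule mult_right_mono) simp
  also have "\<dots> = M [] * 2 ^ (\<Sum>j<length (s @ [b]). w (take j (s @ [b])))"
    by (simp add: sum.lessThan_Suc power_add)
  finally show ?case .
qed simp

section \<open>Conditional upper probabilities\<close>

lemma upper_prob_mono:
  assumes "G \<subseteq> H" shows "upper_prob \<phi> G s \<le> upper_prob \<phi> H s"
  unfolding upper_prob_def
proof (rule Inf_superset_mono, safe)
  fix M assume sm: "supermartingale \<phi> M"
    and H: "\<forall>\<omega>\<in>cyl s. ereal (indicator H \<omega>) \<le> liminf (\<lambda>n. ereal (M (init \<omega> n)))"
  have "ereal (indicator G \<omega>) \<le> ereal (indicator H \<omega>)" for \<omega>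
    using assms by (auto simp: indicator_def)
  with H have "\<forall>\<omega>\<in>cyl s. ereal (indicator G \<omega>) \<le> liminf (\<lambda>n. ereal (M (init \<omega> n)))"
    using order_trans by blast
  with sm show "\<exists>M'. ereal (M s) = ereal (M' s) \<and> supermartingale \<phi> M' \<and>
      (\<forall>\<omega>\<in>cyl s. ereal (indicator G \<omega>) \<le> liminf (\<lambda>n. ereal (M' (init \<omega> n))))"
    by blast
qed

lemma upper_prob_le_weighted_root:
  assumes fs: "forecasting_system \<phi>"
    and up: "\<And>t. 1 / 2 ^ w t \<le> upper_fc \<phi> t" and low: "\<And>t. 1 / 2 ^ w t \<le> 1 - lower_fc \<phi> t"
    and root: "upper_prob \<phi> G [] \<le> ereal y"
  shows "upper_prob \<phi> G s \<le> ereal (y * 2 ^ (\<Sum>j<length s. w (take j s)))"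
proof (rule ereal_le_epsilon2)
  fix e :: real assume e: "0 < e"
  define W :: real where "W = 2 ^ (\<Sum>j<length s. w (take j s))"
  have W: "0 < W" by (simp add: W_def)
  have "upper_prob \<phi> G [] < ereal (y + e / W)"
    using root e W by (simp add: le_less_trans)
  then obtain M where M: "M [] < y + e / W" "supermartingale \<phi> M"
      "\<forall>\<omega>. ereal (indicator G \<omega>) \<le> liminf (\<lambda>n. ereal (M (init \<omega> n)))"
    unfolding upper_prob_def Inf_less_iff by (auto simp: cyl_def init_def)
  have "0 \<le> liminf (\<lambda>n. ereal (M (init \<omega> n)))" for \<omega>
    using M(3) order_trans[of 0 "ereal (indicator G \<omega>)"] by simp
  then have nonneg: "0 \<le> M t" for t by (rule supermartingale_nonneg[OF fs M(2)])
  have "upper_prob \<phi> G s \<le> ereal (M s)"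
    unfolding upper_prob_def by (rule Inf_lower) (use M in blast)
  also have "M s \<le> M [] * W"
    unfolding W_def by (rule supermartingale_le_weighted[OF fs M(2) nonneg up low])
  also have "M [] * W \<le> y * W + e"
    using M(1) W by (simp add: field_simps)
  finally show "upper_prob \<phi> G s \<le> ereal (y * 2 ^ (\<Sum>j<length s. w (take j s))) + ereal e"
    by (simp add: W_def)
qed

lemma upper_prob_le_of_root_bound:
  assumes fs: "forecasting_system \<phi>"
    and up: "\<And>t. 1 / 2 ^ w (enc_str t) \<le> upper_fc \<phi> t"
    and low: "\<And>t. 1 / 2 ^ w (enc_str t) \<le> 1 - lower_fc \<phi> t"
    and root: "upper_prob \<phi> G [] \<le> ereal (1 / 2 ^ (N + (\<Sum>c<Suc (enc_str s). w c)))"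
  shows "upper_prob \<phi> G s \<le> ereal (1 / 2 ^ N)"
proof -
  let ?K = "\<Sum>c<Suc (enc_str s). w c"
  have "upper_prob \<phi> G s \<le> ereal (1 / 2 ^ (N + ?K) * 2 ^ (\<Sum>j<length s. w (enc_str (take j s))))"
    using upper_prob_le_weighted_root[OF fs _ _ root, of "\<lambda>t. w (enc_str t)"] up low by blast
  also have "\<dots> \<le> ereal (1 / 2 ^ (N + ?K) * 2 ^ ?K)"
    using sum_prefix_codes_le[where w = w and s = s]
    by (simp del: sum.lessThan_Suc add: divide_right_mono)
  also have "1 / 2 ^ (N + ?K) * 2 ^ ?K = (1 / 2 ^ N :: real)"
    by (simp add: power_add)
  finally show ?thesis .
qed

lemma cylset_sect_ge_subset:
  assumes "partial_cut (sect A n)"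
  shows "cylset (sect_ge A n l) \<subseteq> cylset (sect A n) - cylset (sect_lt A n l)"
proof
  fix \<omega> assume "\<omega> \<in> cylset (sect_ge A n l)"
  then obtain t where t: "t \<in> sect A n" "l \<le> length t" "init \<omega> (length t) = t"
    by (auto simp: cylset_def sect_ge_def cyl_def)
  have "u = t" if "u \<in> sect A n" "init \<omega> (length u) = u" "length u \<le> length t" for u
  proof -
    have "take (length u) (init \<omega> (length t)) = init \<omega> (length u)"
      using that(3) by (simp add: init_def take_map)
    then have "take (length u) t = u" using t(3) that(2) by simp
    then have "prefix u t" by (metis take_is_prefix)
    with assms that(1) t(1) show "u = t" unfolding partial_cut_def by blast
  qed
  with t show "\<omega> \<in> cylset (sect A n) - cylset (sect_lt A n l)"
    by (fastforce simp: cylset_def sect_lt_def cyl_def)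
qed

text \<open>For \<open>n \<le> N\<close> the Schnorr modulus \<open>e N n\<close> applies; sections with \<open>n > N\<close> have upper
  probability at most \<open>2 ^ -n\<close> anyway.\<close>

definition uniform_tail_length :: "(nat \<Rightarrow> nat \<Rightarrow> nat) \<Rightarrow> nat \<Rightarrow> nat" where
  "uniform_tail_length e N = (\<Sum>n<Suc N. e N n)"

lemma upper_prob_sect_ge_le:
  assumes root: "\<And>n. upper_prob \<phi> (cylset (sect A n)) [] \<le> ereal (1 / 2 ^ n)"
    and tail: "\<And>N n l. e N n \<le> l \<Longrightarrow>
      upper_prob \<phi> (cylset (sect A n) - cylset (sect_lt A n l)) [] \<le> ereal (1 / 2 ^ N)"
    and cut: "partial_cut (sect A n)" and l: "uniform_tail_length e N \<le> l"
  shows "upper_prob \<phi> (cylset (sect_ge A n l)) [] \<le> ereal (1 / 2 ^ N)"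
proof (cases "N < n")
  case True
  have "upper_prob \<phi> (cylset (sect_ge A n l)) [] \<le> upper_prob \<phi> (cylset (sect A n)) []"
    by (rule upper_prob_mono) (auto simp: cylset_def sect_ge_def)
  also have "\<dots> \<le> ereal (1 / 2 ^ n)" by (rule root)
  also have "\<dots> \<le> ereal (1 / 2 ^ N)" using True by (simp add: divide_left_mono power_increasing)
  finally show ?thesis .
next
  case False
  then have "e N n \<le> uniform_tail_length e N"
    unfolding uniform_tail_length_def by (intro member_le_sum) auto
  with l have "upper_prob \<phi> (cylset (sect A n) - cylset (sect_lt A n l)) [] \<le> ereal (1 / 2 ^ N)"
    by (intro tail) simp
  with upper_prob_mono[OF cylset_sect_ge_subset[OF cut]] show ?thesis by (rule order_trans)
qed

text \<open>The inner sum bounds the total weight along the prefixes of the string coded by \<open>c\<close>;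
  summing over \<open>M \<le> N\<close> makes the length monotone and unbounded in \<open>N\<close>.\<close>

definition conditional_test_length :: "(nat \<Rightarrow> nat \<Rightarrow> nat) \<Rightarrow> (nat \<Rightarrow> nat) \<Rightarrow> nat \<Rightarrow> nat \<Rightarrow> nat" where
  "conditional_test_length e w N c = N + (\<Sum>M<Suc N. uniform_tail_length e (M + (\<Sum>t<Suc c. w t)))"

lemma recursive_conditional_test_length:
  assumes e: "recursive_nat2 e" and w: "recursive_fn 1 (\<lambda>xs. w (xs ! 0))"
  shows "recursive_nat2 (conditional_test_length e w)"
proof -
  have "recursive_fn 2 (\<lambda>xs. e (xs ! 1) (xs ! 0))"
    by (rule recursive_nat2_compose[OF e]) (simp_all add: recursive_fn_proj)
  from recursive_fn_sum[OF this[folded One_nat_def Suc_1] recursive_fn_Suc[OF recursive_fn_proj[of 0 1]]]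
  have tail: "recursive_fn 1 (\<lambda>xs. uniform_tail_length e (xs ! 0))"
    unfolding uniform_tail_length_def by simp
  from recursive_fn_sum[OF recursive_fn_compose_unary[OF w recursive_fn_proj[of 0 "Suc 1"]]
      recursive_fn_Suc[OF recursive_fn_proj[of 0 1]]]
  have weight: "recursive_fn 1 (\<lambda>xs. \<Sum>t<Suc (xs ! 0). w t)" by simp
  have "recursive_fn 3 (\<lambda>ys. uniform_tail_length e (ys ! 0 + (\<Sum>t<Suc (ys ! 2). w t)))"
    by (intro recursive_fn_compose_unary[OF tail] recursive_fn_add recursive_fn_proj
        recursive_fn_compose_unary[OF weight]) simp_all
  from recursive_fn_sum[OF this[simplified numeral_3_eq_3 numeral_2_eq_2]
      recursive_fn_Suc[OF recursive_fn_proj[of 0 "Suc (Suc 0)"]]]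
  have "recursive_fn 2 (\<lambda>xs. \<Sum>M<Suc (xs ! 0). uniform_tail_length e (M + (\<Sum>t<Suc (xs ! 1). w t)))"
    by (simp add: numeral_2_eq_2)
  then show ?thesis
    unfolding recursive_nat2_def conditional_test_length_def
    by (intro recursive_fn_add recursive_fn_proj) simp_all
qed

lemma growth_function_conditional_test_length:
  assumes "recursive_nat2 (conditional_test_length e w)"
  shows "growth_function (\<lambda>N. conditional_test_length e w N c)"
  unfolding growth_function_def
proof (intro conjI allI)
  show "recursive_fn 1 (\<lambda>xs. conditional_test_length e w (xs ! 0) c)"
    by (rule recursive_nat2_compose[OF assms recursive_fn_proj recursive_fn_const]) simp
  show "mono (\<lambda>N. conditional_test_length e w N c)"
    unfolding conditional_test_length_def
    by (intro monoI add_mono sum_mono2) (auto simp del: sum.lessThan_Suc)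
  show "\<exists>N. m \<le> conditional_test_length e w N c" for m
    unfolding conditional_test_length_def by (intro exI[of _ m]) simp
qed

lemma uniform_tail_length_le_conditional_test_length:
  "uniform_tail_length e (N + (\<Sum>t<Suc c. w t)) \<le> conditional_test_length e w N c"
  unfolding conditional_test_length_def
  using member_le_sum[of N "{..<Suc N}" "\<lambda>M. uniform_tail_length e (M + (\<Sum>t<Suc c. w t))"]
  by (simp del: sum.lessThan_Suc)

theorem lemma8p3:
  fixes \<phi> :: "bool list \<Rightarrow> real set" and A :: "(nat \<times> bool list) set"
  assumes "forecasting_system \<phi>" and "non_degenerate \<phi>" and "computable_fs \<phi>"
    and "schnorr_test \<phi> A"
    and "\<forall>n. partial_cut (sect A n)"
  shows "\<exists>e'. recursive_nat_str e' \<and> (\<forall>s. growth_function (\<lambda>N. e' N s)) \<and>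
           (\<forall>N n s l. l \<ge> e' N s \<longrightarrow>
              upper_prob \<phi> (cylset (sect_ge A n l)) s \<le> ereal (1 / 2 ^ N))"
proof -
  obtain e where e: "recursive_nat2 e"
    and tail: "\<And>N n l. e N n \<le> l \<Longrightarrow>
      upper_prob \<phi> (cylset (sect A n) - cylset (sect_lt A n l)) [] \<le> ereal (1 / 2 ^ N)"
    and root: "\<And>n. upper_prob \<phi> (cylset (sect A n)) [] \<le> ereal (1 / 2 ^ n)"
    using assms(4) unfolding schnorr_test_def by blast
  obtain w where w: "recursive_fn 1 (\<lambda>xs. w (xs ! 0))"
    and up: "\<And>t. 1 / 2 ^ w (enc_str t) \<le> upper_fc \<phi> t" and low: "\<And>t. 1 / 2 ^ w (enc_str t) \<le> 1 - lower_fc \<phi> t"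
    using non_degenerate_dyadic_weight[OF assms(2,3)] by blast
  note e'_rec = recursive_conditional_test_length[OF e w]
  show ?thesis
  proof (intro exI[of _ "\<lambda>N s. conditional_test_length e w N (enc_str s)"] conjI allI impI)
    show "recursive_nat_str (\<lambda>N s. conditional_test_length e w N (enc_str s))"
      using e'_rec unfolding recursive_nat_str_def recursive_nat2_def by auto
    show "growth_function (\<lambda>N. conditional_test_length e w N (enc_str s))" for s
      by (rule growth_function_conditional_test_length[OF e'_rec])
    fix N n s l assume "conditional_test_length e w N (enc_str s) \<le> l"
    with uniform_tail_length_le_conditional_test_length
    have "uniform_tail_length e (N + (\<Sum>c<Suc (enc_str s). w c)) \<le> l" by (rule le_trans)
    with root tail assms(5)
    have "upper_prob \<phi> (cylset (sect_ge A n l)) [] \<le> ereal (1 / 2 ^ (N + (\<Sum>c<Suc (enc_str s). w c)))"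
      by (intro upper_prob_sect_ge_le) auto
    then show "upper_prob \<phi> (cylset (sect_ge A n l)) s \<le> ereal (1 / 2 ^ N)"
      by (rule upper_prob_le_of_root_bound[OF assms(1) up low])
  qed
qed

end
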